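(* Let $(X,\kappa)$ be a finite digital image with simplicial Euler characteristic $\chi(X)\neq 0$, and let $f:X\to X$ be a continuous map strongly homotopic to the identity $\mathrm{id}_X$. Then $f$ has a fixed point or at least two approximate fixed points.
   Context: A digital image is a pair $(X,\kappa)$ where $X$ is a set and $\kappa$ is a symmetric irreflexive relation on $X$ (the adjacency). Write $x\leftrightarrow y$ if adjacent, $x\Leftrightarrow y$ if adjacent or equal. A map $f$ is continuous if $x\leftrightarrow y$ implies $f(x)\Leftrightarrow f(y)$. A point $x$ is an approximate fixed point of $f:X\to X$ if $f(x)\Leftrightarrow x$. The digital interval $[0,m]_{\mathbb Z}$ has consecutive integers adjacent. Continuous $f,g:X\to Y$ are strongly homotopic ($f\simeq^* g$) if there exist $m\ge1$ and $H:X\times[0,m]_{\mathbb Z}\to Y$ with $H(\cdot,0)=f$, $H(\cdot,m)=g$, such that whenever $(x,t)\neq(x',t')$, $x\Leftrightarrow x'$ and $|t-t'|\le1$, we have $H(x,t)\Leftrightarrow H(x',t')$. Simplicial homology: a $q$-simplex of $X$ is a set of $q+1$ pairwise adjacent points. $C_q(X)$ is the free abelian group generated by ordered $q$-simplices $\langle x_0,\dots,x_q\rangle$ modulo $\langle x_{\rho(0)},\dots,x_{\rho(q)}\rangle=\operatorname{sgn}(\rho)\langle x_0,\dots,x_q\rangle$, with boundary $\partial\langle x_0,\dots,x_q\rangle=\sum_{i=0}^q(-1)^i\langle x_0,\dots,\widehat{x_i},\dots,x_q\rangle$; $H_q(X)$ is its homology. The simplicial Euler characteristic is $\chi(X)=\sum_{q\ge0}(-1)^q\operatorname{rank}H_q(X)$.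 *)

theory Defs
  imports "HOL-Algebra.Free_Abelian_Groups" "HOL-Combinatorics.Permutations"
begin

definition digital_image :: "'a set \<Rightarrow> ('a \<Rightarrow> 'a \<Rightarrow> bool) \<Rightarrow> bool" where
  "digital_image X adj \<longleftrightarrow>
     (\<forall>x\<in>X. \<forall>y\<in>X. adj x y \<longrightarrow> adj y x) \<and> (\<forall>x\<in>X. \<not> adj x x)"

definition adjeq :: "('a \<Rightarrow> 'a \<Rightarrow> bool) \<Rightarrow> 'a \<Rightarrow> 'a \<Rightarrow> bool" where
  "adjeq adj x y \<longleftrightarrow> adj x y \<or> x = y"

definition digitally_continuous ::
  "'a set \<Rightarrow> ('a \<Rightarrow> 'a \<Rightarrow> bool) \<Rightarrow> 'b set \<Rightarrow> ('b \<Rightarrow> 'b \<Rightarrow> bool) \<Rightarrow> ('a \<Rightarrow> 'b) \<Rightarrow> bool" where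
  "digitally_continuous X adj Y adjY f \<longleftrightarrow>
     (\<forall>x\<in>X. f x \<in> Y) \<and> (\<forall>x\<in>X. \<forall>y\<in>X. adj x y \<longrightarrow> adjeq adjY (f x) (f y))"

definition approx_fixed_point :: "('a \<Rightarrow> 'a \<Rightarrow> bool) \<Rightarrow> ('a \<Rightarrow> 'a) \<Rightarrow> 'a \<Rightarrow> bool" where
  "approx_fixed_point adj f x \<longleftrightarrow> adjeq adj (f x) x"

text \<open>Strong homotopy; the time parameter ranges over the digital interval [0,m]
  (consecutive integers adjacent), represented by naturals t \<le> m.\<close>
definition strongly_homotopic ::
  "'a set \<Rightarrow> ('a \<Rightarrow> 'a \<Rightarrow> bool) \<Rightarrow> 'b set \<Rightarrow> ('b \<Rightarrow> 'b \<Rightarrow> bool)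
     \<Rightarrow> ('a \<Rightarrow> 'b) \<Rightarrow> ('a \<Rightarrow> 'b) \<Rightarrow> bool" where
  "strongly_homotopic X adj Y adjY f g \<longleftrightarrow>
     (\<exists>m::nat. m \<ge> 1 \<and> (\<exists>H :: 'a \<Rightarrow> nat \<Rightarrow> 'b.
        (\<forall>x\<in>X. \<forall>t\<le>m. H x t \<in> Y) \<and>
        (\<forall>x\<in>X. H x 0 = f x \<and> H x m = g x) \<and>
        (\<forall>x\<in>X. \<forall>x'\<in>X. \<forall>t\<le>m. \<forall>t'\<le>m.
            (x, t) \<noteq> (x', t') \<and> adjeq adj x x' \<and> t \<le> Suc t' \<and> t' \<le> Suc t
            \<longrightarrow> adjeq adjY (H x t) (H x' t'))))"

definition osimplices :: "'a set \<Rightarrow> ('a \<Rightarrow> 'a \<Rightarrow> bool) \<Rightarrow> nat \<Rightarrow> 'a list set" where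
  "osimplices X adj q = {xs. length xs = Suc q \<and> distinct xs \<and> set xs \<subseteq> X \<and>
      (\<forall>i<Suc q. \<forall>j<Suc q. i \<noteq> j \<longrightarrow> adj (xs ! i) (xs ! j))}"

definition free_chains :: "'a set \<Rightarrow> ('a \<Rightarrow> 'a \<Rightarrow> bool) \<Rightarrow> nat \<Rightarrow> ('a list \<Rightarrow>\<^sub>0 int) monoid" where
  "free_chains X adj q = free_Abelian_group (osimplices X adj q)"

definition orient_rels :: "'a set \<Rightarrow> ('a \<Rightarrow> 'a \<Rightarrow> bool) \<Rightarrow> nat \<Rightarrow> ('a list \<Rightarrow>\<^sub>0 int) set" where
  "orient_rels X adj q =
     {frag_of (map (\<lambda>i. xs ! \<rho> i) [0..<Suc q]) - frag_cmul (sign \<rho>) (frag_of xs) | xs \<rho>.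
        xs \<in> osimplices X adj q \<and> \<rho> permutes {..q}}"

definition orient_subgroup :: "'a set \<Rightarrow> ('a \<Rightarrow> 'a \<Rightarrow> bool) \<Rightarrow> nat \<Rightarrow> ('a list \<Rightarrow>\<^sub>0 int) set" where
  "orient_subgroup X adj q = generate (free_chains X adj q) (orient_rels X adj q)"

definition chain_group :: "'a set \<Rightarrow> ('a \<Rightarrow> 'a \<Rightarrow> bool) \<Rightarrow> nat \<Rightarrow> ('a list \<Rightarrow>\<^sub>0 int) set monoid" where
  "chain_group X adj q = free_chains X adj q Mod orient_subgroup X adj q"

definition remove_nth :: "nat \<Rightarrow> 'a list \<Rightarrow> 'a list" where
  "remove_nth i xs = take i xs @ drop (Suc i) xs"

definition free_boundary :: "nat \<Rightarrow> ('a list \<Rightarrow>\<^sub>0 int) \<Rightarrow> ('a list \<Rightarrow>\<^sub>0 int)" where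
  "free_boundary q c =
     frag_extend (\<lambda>xs. \<Sum>i\<le>q. frag_cmul ((-1) ^ i) (frag_of (remove_nth i xs))) c"

definition chain_boundary :: "'a set \<Rightarrow> ('a \<Rightarrow> 'a \<Rightarrow> bool) \<Rightarrow> nat
     \<Rightarrow> ('a list \<Rightarrow>\<^sub>0 int) set \<Rightarrow> ('a list \<Rightarrow>\<^sub>0 int) set" where
  "chain_boundary X adj q A =
     orient_subgroup X adj q #>\<^bsub>free_chains X adj q\<^esub> free_boundary (Suc q) (SOME c. c \<in> A)"

definition cycles :: "'a set \<Rightarrow> ('a \<Rightarrow> 'a \<Rightarrow> bool) \<Rightarrow> nat \<Rightarrow> ('a list \<Rightarrow>\<^sub>0 int) set set" where
  "cycles X adj q =
     (case q of 0 \<Rightarrow> carrier (chain_group X adj 0)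
      | Suc p \<Rightarrow> {A \<in> carrier (chain_group X adj (Suc p)).
                    chain_boundary X adj p A = \<one>\<^bsub>chain_group X adj p\<^esub>})"

definition boundaries :: "'a set \<Rightarrow> ('a \<Rightarrow> 'a \<Rightarrow> bool) \<Rightarrow> nat \<Rightarrow> ('a list \<Rightarrow>\<^sub>0 int) set set" where
  "boundaries X adj q = chain_boundary X adj q ` carrier (chain_group X adj (Suc q))"

definition simplicial_homology ::
  "'a set \<Rightarrow> ('a \<Rightarrow> 'a \<Rightarrow> bool) \<Rightarrow> nat \<Rightarrow> ('a list \<Rightarrow>\<^sub>0 int) set set monoid" where
  "simplicial_homology X adj q =
     subgroup_generated (chain_group X adj q) (cycles X adj q) Mod boundaries X adj q"

definition ab_independent :: "('g, 'm) monoid_scheme \<Rightarrow> 'g set \<Rightarrow> bool" where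
  "ab_independent G S \<longleftrightarrow> S \<subseteq> carrier G \<and> finite S \<and>
     (\<forall>n :: 'g \<Rightarrow> int. finprod G (\<lambda>x. x [^]\<^bsub>G\<^esub> n x) S = \<one>\<^bsub>G\<^esub> \<longrightarrow> (\<forall>x\<in>S. n x = 0))"

definition ab_rank :: "('g, 'm) monoid_scheme \<Rightarrow> nat" where
  "ab_rank G = Sup {card S | S. ab_independent G S}"

text \<open>Simplicial Euler characteristic; for finite X, H_q = 0 for q \<ge> card X,
  so the sum over q \<le> card X is the full alternating sum.\<close>
definition simplicial_euler_char :: "'a set \<Rightarrow> ('a \<Rightarrow> 'a \<Rightarrow> bool) \<Rightarrow> int" where
  "simplicial_euler_char X adj =
     (\<Sum>q\<le>card X. (-1) ^ q * int (ab_rank (simplicial_homology X adj q)))"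

end

theory Submission
  imports Defs
begin

text \<open>Some iterate \<open>e = f ^^ k\<close> is idempotent, and on its image \<open>Y\<close> the map \<open>f\<close> is an
  automorphism; composing a strong homotopy from \<open>f\<close> to the identity with \<open>e\<close> gives one on \<open>Y\<close>.
  For an automorphism \<open>p\<close> strongly homotopic to the identity we induct on the size of the image.
  If no closed neighbourhood is properly contained in another, the homotopy, run backwards from
  the identity, can only enlarge closed neighbourhoods, so \<open>x\<close> lies in the neighbourhood of
  \<open>p x\<close>. Otherwise we retract continuously onto the points with maximal closed neighbourhood,
  a smaller image which \<open>p\<close> preserves. An approximate fixed point \<open>x\<close> that is not fixed yields a
  second one, \<open>f x\<close>. The Euler characteristic only serves to exclude the empty image, whose
  homology is trivial.\<close>

definition closed_nbhd :: "'a set \<Rightarrow> ('a \<Rightarrow> 'a \<Rightarrow> bool) \<Rightarrow> 'a \<Rightarrow> 'a set" where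
  "closed_nbhd X adj x = {y \<in> X. adjeq adj x y}"

definition nbhd_maximal_points :: "'a set \<Rightarrow> ('a \<Rightarrow> 'a \<Rightarrow> bool) \<Rightarrow> 'a set" where
  "nbhd_maximal_points X adj =
     {v \<in> X. \<forall>w\<in>X. \<not> closed_nbhd X adj v \<subset> closed_nbhd X adj w}"

definition strong_homotopy :: "'a set \<Rightarrow> ('a \<Rightarrow> 'a \<Rightarrow> bool) \<Rightarrow> nat \<Rightarrow> ('a \<Rightarrow> nat \<Rightarrow> 'a) \<Rightarrow> bool" where
  "strong_homotopy X adj m H \<longleftrightarrow>
     (\<forall>x\<in>X. \<forall>t\<le>m. H x t \<in> X) \<and>
     (\<forall>x\<in>X. \<forall>x'\<in>X. \<forall>t\<le>m. \<forall>t'\<le>m.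
        (x, t) \<noteq> (x', t') \<and> adjeq adj x x' \<and> t \<le> Suc t' \<and> t' \<le> Suc t
        \<longrightarrow> adjeq adj (H x t) (H x' t'))"

definition digital_automorphism :: "'a set \<Rightarrow> ('a \<Rightarrow> 'a \<Rightarrow> bool) \<Rightarrow> ('a \<Rightarrow> 'a) \<Rightarrow> bool" where
  "digital_automorphism X adj p \<longleftrightarrow>
     bij_betw p X X \<and> (\<forall>x\<in>X. \<forall>y\<in>X. adj (p x) (p y) \<longleftrightarrow> adj x y)"

lemma adjeq_refl [simp]: "adjeq adj x x"
  by (simp add: adjeq_def)

lemma adjeq_sym:
  "digital_image X adj \<Longrightarrow> x \<in> X \<Longrightarrow> y \<in> X \<Longrightarrow> adjeq adj x y \<Longrightarrow> adjeq adj y x"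
  unfolding digital_image_def adjeq_def by auto

lemma digital_image_subset: "digital_image X adj \<Longrightarrow> Y \<subseteq> X \<Longrightarrow> digital_image Y adj"
  unfolding digital_image_def by blast

lemma mem_closed_nbhd_commute:
  "digital_image X adj \<Longrightarrow> x \<in> X \<Longrightarrow> y \<in> closed_nbhd X adj x \<Longrightarrow> x \<in> closed_nbhd X adj y"
  unfolding closed_nbhd_def using adjeq_sym by fastforce

lemma digitally_continuous_adjeq:
  assumes "digitally_continuous X adj Y adjY f" "x \<in> X" "y \<in> X" "adjeq adj x y"
  shows "adjeq adjY (f x) (f y)"
  using assms unfolding digitally_continuous_def adjeq_def by auto

lemma digitally_continuous_funpow:
  assumes "digitally_continuous X adj X adj f"
  shows "digitally_continuous X adj X adj (f ^^ n)"
proof (induction n)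
  case (Suc n)
  then show ?case
    using assms unfolding digitally_continuous_def by (auto intro: digitally_continuous_adjeq[OF assms])
qed (simp add: digitally_continuous_def adjeq_def)

lemma strongly_homotopicE:
  assumes "strongly_homotopic X adj X adj f g"
  obtains m H where "strong_homotopy X adj m H" "\<forall>x\<in>X. H x 0 = f x \<and> H x m = g x"
  using assms unfolding strongly_homotopic_def strong_homotopy_def by blast

lemma strong_homotopy_compose:
  assumes H: "strong_homotopy X adj m H" and "Y \<subseteq> X" and g: "digitally_continuous X adj Y adj g"
  shows "strong_homotopy Y adj m (\<lambda>x t. g (H x t))"
  unfolding strong_homotopy_def
proof (intro conjI ballI allI impI)
  fix x t assume "x \<in> Y" "t \<le> m"
  then show "g (H x t) \<in> Y"
    using H g \<open>Y \<subseteq> X\<close> unfolding strong_homotopy_def digitally_continuous_def by blast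
next
  fix x x' t t' assume "x \<in> Y" "x' \<in> Y" "t \<le> m" "t' \<le> m"
    and "(x, t) \<noteq> (x', t') \<and> adjeq adj x x' \<and> t \<le> Suc t' \<and> t' \<le> Suc t"
  with H \<open>Y \<subseteq> X\<close> have "adjeq adj (H x t) (H x' t')" "H x t \<in> X" "H x' t' \<in> X"
    unfolding strong_homotopy_def by blast+
  then show "adjeq adj (g (H x t)) (g (H x' t'))"
    by (rule digitally_continuous_adjeq[OF g, rotated -1])
qed

text \<open>Inductive step backwards in time: \<open>H x t\<close> is adjacent or equal to \<open>H u (Suc t)\<close> for
  \<open>u \<in> N(x)\<close>, and the neighbourhood of \<open>H u (Suc t)\<close> contains \<open>N(u)\<close>, hence equals it by rigidity.\<close>

lemma closed_nbhd_subset_strong_homotopy_rigid: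
  assumes X: "digital_image X adj"
    and rigid: "nbhd_maximal_points X adj = X"
    and H: "strong_homotopy X adj m H" and Hm: "\<forall>x\<in>X. H x m = x"
    and "t \<le> m"
  shows "\<forall>x\<in>X. closed_nbhd X adj x \<subseteq> closed_nbhd X adj (H x t)"
  using \<open>t \<le> m\<close>
proof (induction t rule: inc_induct)
  case base
  then show ?case using Hm by simp
next
  case (step t)
  have HX: "H y s \<in> X" if "y \<in> X" "s \<le> m" for y s
    using H that unfolding strong_homotopy_def by blast
  have Hadj: "adjeq adj (H x s) (H x' s')"
    if "x \<in> X" "x' \<in> X" "s \<le> m" "s' \<le> m" "(x, s) \<noteq> (x', s')" "adjeq adj x x'"
       "s \<le> Suc s'" "s' \<le> Suc s" for x x' s s'
    using H that unfolding strong_homotopy_def by blast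
  show ?case
  proof (intro ballI subsetI)
    fix x u assume "x \<in> X" and u: "u \<in> closed_nbhd X adj x"
    then have "u \<in> X" "adjeq adj x u" unfolding closed_nbhd_def by auto
    have "Suc t \<le> m" "t \<le> m" using step.hyps by auto
    have "adjeq adj (H x t) (H u (Suc t))"
      by (rule Hadj) (use \<open>x \<in> X\<close> \<open>u \<in> X\<close> \<open>adjeq adj x u\<close> \<open>Suc t \<le> m\<close> in auto)
    then have Hxt: "H x t \<in> closed_nbhd X adj (H u (Suc t))"
      using adjeq_sym[OF X] HX \<open>x \<in> X\<close> \<open>u \<in> X\<close> \<open>Suc t \<le> m\<close> \<open>t \<le> m\<close>
      unfolding closed_nbhd_def by blast
    have "closed_nbhd X adj u \<subseteq> closed_nbhd X adj (H u (Suc t))"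
      using step.IH \<open>u \<in> X\<close> by blast
    then have "closed_nbhd X adj u = closed_nbhd X adj (H u (Suc t))"
      using rigid \<open>u \<in> X\<close> HX[OF \<open>u \<in> X\<close> \<open>Suc t \<le> m\<close>]
      unfolding nbhd_maximal_points_def by blast
    with Hxt show "u \<in> closed_nbhd X adj (H x t)"
      using mem_closed_nbhd_commute[OF X] \<open>u \<in> X\<close> by auto
  qed
qed

lemma exists_nbhd_maximal_above:
  assumes "finite X" "v \<in> X"
  shows "\<exists>w\<in>nbhd_maximal_points X adj. closed_nbhd X adj v \<subseteq> closed_nbhd X adj w"
proof -
  have "finite (closed_nbhd X adj ` X)" "closed_nbhd X adj v \<in> closed_nbhd X adj ` X"
    using assms by auto
  from finite_has_maximal2[OF this] obtain w where "w \<in> X"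
    and "closed_nbhd X adj v \<subseteq> closed_nbhd X adj w"
    and "\<forall>N\<in>closed_nbhd X adj ` X. closed_nbhd X adj w \<subseteq> N \<longrightarrow> closed_nbhd X adj w = N"
    by auto
  then show ?thesis unfolding nbhd_maximal_points_def by blast
qed

lemma nbhd_maximal_points_retraction:
  assumes X: "digital_image X adj" and "finite X"
  obtains r where "digitally_continuous X adj (nbhd_maximal_points X adj) adj r"
    and "\<forall>y\<in>nbhd_maximal_points X adj. r y = y"
proof -
  let ?M = "nbhd_maximal_points X adj" and ?N = "closed_nbhd X adj"
  have "\<forall>v\<in>X. \<exists>w. w \<in> ?M \<and> ?N v \<subseteq> ?N w \<and> (v \<in> ?M \<longrightarrow> w = v)"
  proof
    fix v assume "v \<in> X"
    show "\<exists>w. w \<in> ?M \<and> ?N v \<subseteq> ?N w \<and> (v \<in> ?M \<longrightarrow> w = v)"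
    proof (cases "v \<in> ?M")
      case False
      then show ?thesis using exists_nbhd_maximal_above[OF \<open>finite X\<close> \<open>v \<in> X\<close>] by blast
    qed blast
  qed
  from bchoice[OF this] obtain r
    where r: "\<forall>v\<in>X. r v \<in> ?M \<and> ?N v \<subseteq> ?N (r v) \<and> (v \<in> ?M \<longrightarrow> r v = v)" by blast
  have "?M \<subseteq> X" unfolding nbhd_maximal_points_def by blast
  have "adjeq adj (r u) (r v)" if "u \<in> X" "v \<in> X" "adj u v" for u v
  proof -
    have "v \<in> ?N (r u)" using r that unfolding closed_nbhd_def adjeq_def by auto
    then have "r u \<in> ?N v" using mem_closed_nbhd_commute[OF X] r \<open>?M \<subseteq> X\<close> that by blast
    then have "r u \<in> ?N (r v)" using r that by blast
    then show ?thesis using adjeq_sym[OF X] r \<open>?M \<subseteq> X\<close> that unfolding closed_nbhd_def by blast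
  qed
  then have "digitally_continuous X adj ?M adj r"
    using r unfolding digitally_continuous_def by blast
  moreover have "\<forall>y\<in>?M. r y = y" using r \<open>?M \<subseteq> X\<close> by blast
  ultimately show ?thesis by (rule that)
qed

lemma closed_nbhd_digital_automorphism:
  assumes "digital_automorphism X adj p" "z \<in> X"
  shows "closed_nbhd X adj (p z) = p ` closed_nbhd X adj z"
proof -
  have p: "bij_betw p X X" "\<forall>x\<in>X. \<forall>y\<in>X. adj (p x) (p y) \<longleftrightarrow> adj x y"
    using assms(1) unfolding digital_automorphism_def by auto
  have adjeq_p: "adjeq adj (p z) (p y) \<longleftrightarrow> adjeq adj z y" if "y \<in> X" for y
    using p that \<open>z \<in> X\<close> unfolding adjeq_def bij_betw_def inj_on_def by blast
  have "closed_nbhd X adj (p z) = {y \<in> p ` X. adjeq adj (p z) y}"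
    using bij_betw_imp_surj_on[OF p(1)] unfolding closed_nbhd_def by simp
  also have "\<dots> = p ` {y \<in> X. adjeq adj (p z) (p y)}" by auto
  also have "\<dots> = p ` closed_nbhd X adj z"
    using adjeq_p unfolding closed_nbhd_def by auto
  finally show ?thesis .
qed

lemma digital_automorphism_nbhd_maximal_points:
  assumes p: "digital_automorphism X adj p" and x: "x \<in> nbhd_maximal_points X adj"
  shows "p x \<in> nbhd_maximal_points X adj"
proof -
  let ?N = "closed_nbhd X adj"
  have inj: "inj_on p X" and surj: "p ` X = X"
    using p unfolding digital_automorphism_def bij_betw_def by auto
  have "x \<in> X" using x unfolding nbhd_maximal_points_def by blast
  have no_bigger: "\<not> ?N (p x) \<subset> ?N (p w)" if "w \<in> X" for w
  proof
    assume "?N (p x) \<subset> ?N (p w)"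
    then have "p ` ?N x \<subset> p ` ?N w"
      using closed_nbhd_digital_automorphism[OF p] \<open>x \<in> X\<close> \<open>w \<in> X\<close> by simp
    moreover have "?N x \<subseteq> X" "?N w \<subseteq> X" unfolding closed_nbhd_def by auto
    ultimately have "?N x \<subseteq> ?N w" "?N x \<noteq> ?N w"
      using inj_on_image_mem_iff[OF inj] by (blast, blast)
    with x \<open>w \<in> X\<close> show False unfolding nbhd_maximal_points_def by blast
  qed
  have "\<not> ?N (p x) \<subset> ?N w" if "w \<in> X" for w
  proof -
    obtain w0 where "w0 \<in> X" "w = p w0" using surj \<open>w \<in> X\<close> by blast
    then show ?thesis using no_bigger by blast
  qed
  with surj \<open>x \<in> X\<close> show ?thesis unfolding nbhd_maximal_points_def by auto
qed

lemma digital_automorphism_restrict: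
  assumes "digital_automorphism X adj p" "Y \<subseteq> X" "finite Y" "p ` Y \<subseteq> Y"
  shows "digital_automorphism Y adj p"
proof -
  have "inj_on p Y"
    using assms(1,2) inj_on_subset unfolding digital_automorphism_def bij_betw_def by blast
  with assms(3,4) have "bij_betw p Y Y" by (simp add: bij_betw_def endo_inj_surj)
  with assms(1,2) show ?thesis unfolding digital_automorphism_def by blast
qed

lemma digital_automorphism_homotopic_id_approx_fixed_point:
  assumes "finite X" "X \<noteq> {}" "digital_image X adj" "digital_automorphism X adj p"
    and "strong_homotopy X adj m H" "\<forall>x\<in>X. H x 0 = p x" "\<forall>x\<in>X. H x m = x"
  shows "\<exists>x\<in>X. adjeq adj (p x) x"
  using assms
proof (induction "card X" arbitrary: X H rule: less_induct)
  case less
  let ?M = "nbhd_maximal_points X adj"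
  have "?M \<subseteq> X" unfolding nbhd_maximal_points_def by blast
  show ?case
  proof (cases "?M = X")
    case True
    obtain x where "x \<in> X" using \<open>X \<noteq> {}\<close> by blast
    moreover have "x \<in> closed_nbhd X adj x" using \<open>x \<in> X\<close> by (simp add: closed_nbhd_def)
    ultimately have "x \<in> closed_nbhd X adj (H x 0)"
      using closed_nbhd_subset_strong_homotopy_rigid[OF less.prems(3) True less.prems(5,7)]
      by blast
    with \<open>x \<in> X\<close> less.prems(6) show ?thesis unfolding closed_nbhd_def by auto
  next
    case False
    obtain r where r: "digitally_continuous X adj ?M adj r" "\<forall>y\<in>?M. r y = y"
      using nbhd_maximal_points_retraction[OF less.prems(3,1)] by blast
    have "card ?M < card X"
      using False \<open>?M \<subseteq> X\<close> \<open>finite X\<close> by (simp add: psubset_card_mono psubset_eq)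
    moreover have "finite ?M" using \<open>?M \<subseteq> X\<close> \<open>finite X\<close> finite_subset by blast
    moreover have "?M \<noteq> {}"
      using exists_nbhd_maximal_above[OF \<open>finite X\<close>] \<open>X \<noteq> {}\<close> by blast
    moreover have "digital_image ?M adj"
      using digital_image_subset[OF less.prems(3) \<open>?M \<subseteq> X\<close>] .
    moreover have "p ` ?M \<subseteq> ?M"
      using digital_automorphism_nbhd_maximal_points[OF less.prems(4)] by blast
    then have "digital_automorphism ?M adj p"
      using digital_automorphism_restrict[OF less.prems(4) \<open>?M \<subseteq> X\<close> \<open>finite ?M\<close>] by blast
    moreover have "strong_homotopy ?M adj m (\<lambda>x t. r (H x t))"
      using strong_homotopy_compose[OF less.prems(5) \<open>?M \<subseteq> X\<close> r(1)] .
    moreover have "\<forall>x\<in>?M. r (H x 0) = p x" "\<forall>x\<in>?M. r (H x m) = x"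
      using r(2) less.prems(6,7) \<open>p ` ?M \<subseteq> ?M\<close> \<open>?M \<subseteq> X\<close> by (auto simp: subset_iff)
    ultimately have "\<exists>x\<in>?M. adjeq adj (p x) x"
      by (intro less.hyps) auto
    then show ?thesis using \<open>?M \<subseteq> X\<close> by blast
  qed
qed

lemma funpow_image_subset: "f ` X \<subseteq> X \<Longrightarrow> (f ^^ n) ` X \<subseteq> X"
  by (induction n) auto

text \<open>The iterates are eventually periodic; a multiple of the period beyond the preperiod is
  idempotent.\<close>

lemma finite_funpow_idempotent:
  assumes "finite X" "f ` X \<subseteq> X"
  obtains k where "k \<ge> 1" "\<forall>x\<in>X. (f ^^ k) ((f ^^ k) x) = (f ^^ k) x"
proof -
  have "restrict (f ^^ n) X \<in> X \<rightarrow>\<^sub>E X" for n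
    using funpow_image_subset[OF assms(2), of n] by auto
  then have "range (\<lambda>n. restrict (f ^^ n) X) \<subseteq> X \<rightarrow>\<^sub>E X" by blast
  then have "finite (range (\<lambda>n. restrict (f ^^ n) X))"
    by (rule finite_subset) (simp add: assms(1) finite_PiE)
  then have "\<not> inj (\<lambda>n. restrict (f ^^ n) X)"
    using finite_imageD infinite_UNIV_nat by blast
  then obtain a b where "a < b" "restrict (f ^^ a) X = restrict (f ^^ b) X"
    unfolding inj_def by (metis linorder_neq_iff)
  then have period: "(f ^^ b) x = (f ^^ a) x" if "x \<in> X" for x
    using that by (metis restrict_apply')
  have iter: "(f ^^ (m + n)) x = (f ^^ m) ((f ^^ n) x)" for m n x
    by (simp add: funpow_add)
  define d where "d = b - a"
  have "b = d + a" "d \<ge> 1" using \<open>a < b\<close> unfolding d_def by auto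
  have shift: "(f ^^ (n + i * d)) ((f ^^ a) x) = (f ^^ n) ((f ^^ a) x)" if "x \<in> X" for n i x
  proof (induction i)
    case (Suc i)
    have "(f ^^ (n + Suc i * d)) ((f ^^ a) x) = (f ^^ (n + i * d)) ((f ^^ b) x)"
      unfolding \<open>b = d + a\<close> iter[symmetric] by (simp add: algebra_simps)
    also have "\<dots> = (f ^^ n) ((f ^^ a) x)" using Suc period[OF that] by simp
    finally show ?case .
  qed simp
  define k where "k = (a + 1) * d"
  have "k \<ge> a + 1" using mult_le_mono2[OF \<open>d \<ge> 1\<close>, of "a + 1"] unfolding k_def by simp
  have "(f ^^ k) ((f ^^ k) x) = (f ^^ k) x" if "x \<in> X" for x
  proof -
    have "(f ^^ k) ((f ^^ k) x) = (f ^^ ((k - a) + (a + 1) * d)) ((f ^^ a) x)"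
      unfolding iter[symmetric] using \<open>k \<ge> a + 1\<close> by (simp add: k_def)
    also have "\<dots> = (f ^^ (k - a)) ((f ^^ a) x)"
      by (rule shift[OF that])
    also have "\<dots> = (f ^^ k) x"
      unfolding iter[symmetric] using \<open>k \<ge> a + 1\<close> by simp
    finally show ?thesis .
  qed
  with \<open>k \<ge> a + 1\<close> show ?thesis by (intro that[of k]) auto
qed

text \<open>On the image of an idempotent iterate \<open>f ^^ k\<close> the map \<open>f ^^ (k - 1)\<close> inverts \<open>f\<close>, so
  \<open>f\<close> permutes this image and, both being continuous, preserves and reflects adjacency.\<close>

lemma digital_automorphism_funpow_image:
  assumes X: "digital_image X adj" "finite X" and f: "digitally_continuous X adj X adj f"
    and "k \<ge> 1" and idem: "\<forall>x\<in>X. (f ^^ k) ((f ^^ k) x) = (f ^^ k) x"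
  shows "digital_automorphism ((f ^^ k) ` X) adj f"
proof -
  let ?Y = "(f ^^ k) ` X"
  have fX: "f ` X \<subseteq> X" using f unfolding digitally_continuous_def by blast
  have "?Y \<subseteq> X" using funpow_image_subset[OF fX] .
  have fY: "f ` ?Y \<subseteq> ?Y"
  proof (rule image_subsetI)
    fix y assume "y \<in> ?Y"
    then obtain x where "x \<in> X" "y = (f ^^ k) x" by blast
    then have "f y = (f ^^ k) (f x)" by (simp add: funpow_swap1)
    with \<open>x \<in> X\<close> fX show "f y \<in> ?Y" by blast
  qed
  have inverse: "(f ^^ (k - 1)) (f y) = y" if "y \<in> ?Y" for y
  proof -
    have "(f ^^ (k - 1)) (f y) = (f ^^ k) y"
      using \<open>k \<ge> 1\<close> by (metis Suc_diff_le diff_Suc_1 funpow_Suc_right o_apply)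
    then show ?thesis using idem that by auto
  qed
  then have inj: "inj_on f ?Y" by (metis inj_onI)
  moreover have "f ` ?Y = ?Y"
    by (rule endo_inj_surj[OF _ fY inj]) (use X(2) in simp)
  ultimately have "bij_betw f ?Y ?Y" unfolding bij_betw_def by blast
  moreover have "adj (f x) (f y) \<longleftrightarrow> adj x y" if "x \<in> ?Y" "y \<in> ?Y" for x y
  proof
    assume adj_f: "adj (f x) (f y)"
    have "f x \<in> X" "f y \<in> X" using that fY \<open>?Y \<subseteq> X\<close> by blast+
    then have "f x \<noteq> f y" using adj_f X(1) unfolding digital_image_def by auto
    have "adjeq adj ((f ^^ (k - 1)) (f x)) ((f ^^ (k - 1)) (f y))"
      by (rule digitally_continuous_adjeq[OF digitally_continuous_funpow[OF f]])
        (use \<open>f x \<in> X\<close> \<open>f y \<in> X\<close> adj_f in \<open>auto simp: adjeq_def\<close>)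
    then have "adjeq adj x y" using inverse that by simp
    with \<open>f x \<noteq> f y\<close> show "adj x y" unfolding adjeq_def by auto
  next
    assume "adj x y"
    moreover have "x \<in> X" "y \<in> X" using that \<open>?Y \<subseteq> X\<close> by blast+
    ultimately have "adjeq adj (f x) (f y)" "x \<noteq> y"
      using digitally_continuous_adjeq[OF f] X(1) unfolding digital_image_def adjeq_def by auto
    then show "adj (f x) (f y)"
      using inj_on_eq_iff[OF inj that] unfolding adjeq_def by auto
  qed
  ultimately show ?thesis unfolding digital_automorphism_def by blast
qed

lemma strongly_homotopic_id_approx_fixed_point:
  assumes X: "digital_image X adj" "finite X" "X \<noteq> {}"
    and f: "digitally_continuous X adj X adj f" and "strongly_homotopic X adj X adj f id"
  shows "\<exists>x\<in>X. approx_fixed_point adj f x"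
proof -
  obtain m H where H: "strong_homotopy X adj m H" "\<forall>x\<in>X. H x 0 = f x \<and> H x m = x"
    using strongly_homotopicE[OF \<open>strongly_homotopic X adj X adj f id\<close>] by auto
  have fX: "f ` X \<subseteq> X" using f unfolding digitally_continuous_def by blast
  obtain k where "k \<ge> 1" and idem: "\<forall>x\<in>X. (f ^^ k) ((f ^^ k) x) = (f ^^ k) x"
    using finite_funpow_idempotent[OF X(2) fX] by blast
  let ?e = "f ^^ k" and ?Y = "(f ^^ k) ` X"
  have "?Y \<subseteq> X" using funpow_image_subset[OF fX] .
  have "digitally_continuous X adj ?Y adj ?e"
    using digitally_continuous_funpow[OF f] unfolding digitally_continuous_def by blast
  then have "strong_homotopy ?Y adj m (\<lambda>x t. ?e (H x t))"
    by (rule strong_homotopy_compose[OF H(1) \<open>?Y \<subseteq> X\<close>])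
  moreover have "\<forall>y\<in>?Y. ?e (H y 0) = f y"
  proof
    fix y assume "y \<in> ?Y"
    then obtain x where "x \<in> X" "y = ?e x" by blast
    then have "?e (f y) = ?e (?e (f x))" by (simp add: funpow_swap1)
    also have "\<dots> = f y"
      using idem fX \<open>x \<in> X\<close> \<open>y = ?e x\<close> by (simp add: funpow_swap1 image_subset_iff)
    finally show "?e (H y 0) = f y" using H(2) \<open>y \<in> ?Y\<close> \<open>?Y \<subseteq> X\<close> by auto
  qed
  moreover have "\<forall>y\<in>?Y. ?e (H y m) = y"
    using H(2) idem \<open>?Y \<subseteq> X\<close> by auto
  moreover have "digital_automorphism ?Y adj f"
    using digital_automorphism_funpow_image[OF X(1,2) f \<open>k \<ge> 1\<close> idem] .
  ultimately have "\<exists>y\<in>?Y. adjeq adj (f y) y"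
    using digital_automorphism_homotopic_id_approx_fixed_point[of ?Y adj f m]
      digital_image_subset[OF X(1) \<open>?Y \<subseteq> X\<close>] X(2,3) by auto
  then show ?thesis using \<open>?Y \<subseteq> X\<close> unfolding approx_fixed_point_def by blast
qed

lemma approx_fixed_point_image:
  assumes "digital_image X adj" "digitally_continuous X adj X adj f"
    and "x \<in> X" "approx_fixed_point adj f x"
  shows "approx_fixed_point adj f (f x)"
proof -
  have "f x \<in> X" using assms(2,3) unfolding digitally_continuous_def by blast
  then have "adjeq adj (f (f x)) (f x)"
    using assms adjeq_sym digitally_continuous_adjeq unfolding approx_fixed_point_def by metis
  then show ?thesis unfolding approx_fixed_point_def .
qed

definition trivial_monoid :: "('g, 'm) monoid_scheme \<Rightarrow> bool" where
  "trivial_monoid G \<longleftrightarrow> carrier G = {\<one>\<^bsub>G\<^esub>} \<and> \<one>\<^bsub>G\<^esub> \<otimes>\<^bsub>G\<^esub> \<one>\<^bsub>G\<^esub> = \<one>\<^bsub>G\<^esub>"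

lemma trivial_monoid_comm_group: "trivial_monoid G \<Longrightarrow> comm_group G"
  unfolding trivial_monoid_def by (intro comm_groupI) auto

lemma ab_rank_trivial_monoid:
  fixes G :: "('g, 'm) monoid_scheme"
  assumes "trivial_monoid G"
  shows "ab_rank G = 0"
proof -
  interpret comm_group G using trivial_monoid_comm_group[OF assms] .
  have "S = {}" if "ab_independent G S" for S
  proof (rule ccontr)
    assume "S \<noteq> {}"
    have "S \<subseteq> carrier G" and indep: "\<And>n :: 'g \<Rightarrow> int.
        finprod G (\<lambda>x. x [^]\<^bsub>G\<^esub> n x) S = \<one>\<^bsub>G\<^esub> \<Longrightarrow> \<forall>x\<in>S. n x = 0"
      using that unfolding ab_independent_def by auto
    from \<open>S \<subseteq> carrier G\<close> \<open>S \<noteq> {}\<close> assms have S: "S = {\<one>\<^bsub>G\<^esub>}"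
      unfolding trivial_monoid_def by auto
    have "finprod G (\<lambda>x. x [^]\<^bsub>G\<^esub> (1::int)) S \<in> carrier G"
      by (rule finprod_closed) (simp add: S)
    then have "finprod G (\<lambda>x. x [^]\<^bsub>G\<^esub> (1::int)) S = \<one>\<^bsub>G\<^esub>"
      using assms unfolding trivial_monoid_def by blast
    from indep[OF this] S show False by simp
  qed
  moreover have "ab_independent G {}" unfolding ab_independent_def by simp
  ultimately have "{S. ab_independent G S} = {{}}" by auto
  moreover have "{card S | S. ab_independent G S} = card ` {S. ab_independent G S}" by blast
  ultimately show ?thesis unfolding ab_rank_def by simp
qed

lemma trivial_monoid_subgroup_generated:
  assumes "trivial_monoid G"
  shows "trivial_monoid (subgroup_generated G S)"
proof -
  interpret group G using trivial_monoid_comm_group[OF assms] comm_group.axioms(2) by blast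
  have "subgroup (generate G (carrier G \<inter> S)) G" by (rule generate_is_subgroup) blast
  then have "generate G (carrier G \<inter> S) = {\<one>\<^bsub>G\<^esub>}"
    using assms subgroup.one_closed subgroup.subset unfolding trivial_monoid_def by blast
  with assms show ?thesis
    unfolding trivial_monoid_def by (simp add: carrier_subgroup_generated)
qed

lemma trivial_monoid_FactGroup:
  assumes "trivial_monoid G"
  shows "trivial_monoid (G Mod {\<one>\<^bsub>G\<^esub>})"
  using assms unfolding trivial_monoid_def FactGroup_def RCOSETS_def r_coset_def set_mult_def
  by auto

lemma osimplices_empty: "osimplices {} adj q = {}"
  unfolding osimplices_def by auto

lemma trivial_monoid_free_chains_empty: "trivial_monoid (free_chains {} adj q)"
  unfolding trivial_monoid_def free_chains_def osimplices_empty by auto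

lemma orient_subgroup_empty: "orient_subgroup {} adj q = {0}"
proof -
  have "orient_rels {} adj q = {}" unfolding orient_rels_def osimplices_empty by simp
  then show ?thesis unfolding orient_subgroup_def free_chains_def
    using group.generate_empty[OF group_free_Abelian_group] by simp
qed

lemma trivial_monoid_chain_group_empty: "trivial_monoid (chain_group {} adj q)"
proof -
  have "orient_subgroup {} adj q = {\<one>\<^bsub>free_chains {} adj q\<^esub>}"
    unfolding orient_subgroup_empty free_chains_def by simp
  then show ?thesis unfolding chain_group_def
    using trivial_monoid_FactGroup[OF trivial_monoid_free_chains_empty] by simp
qed

lemma boundaries_empty: "boundaries {} adj q = {\<one>\<^bsub>chain_group {} adj q\<^esub>}"
proof -
  have "carrier (chain_group {} adj (Suc q)) = {{0}}" "\<one>\<^bsub>chain_group {} adj q\<^esub> = {0}"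
    using trivial_monoid_chain_group_empty[of adj]
    unfolding trivial_monoid_def chain_group_def FactGroup_def orient_subgroup_empty by auto
  moreover have "chain_boundary {} adj q {0} = {0}"
    unfolding chain_boundary_def orient_subgroup_empty free_boundary_def r_coset_def free_chains_def
    by simp
  ultimately show ?thesis unfolding boundaries_def by simp
qed

lemma simplicial_euler_char_empty: "simplicial_euler_char {} adj = 0"
proof -
  have "trivial_monoid (simplicial_homology {} adj q)" for q
    using trivial_monoid_FactGroup[OF trivial_monoid_subgroup_generated[OF trivial_monoid_chain_group_empty]]
    unfolding simplicial_homology_def boundaries_empty by simp
  then show ?thesis unfolding simplicial_euler_char_def by (simp add: ab_rank_trivial_monoid)
qed

theorem theorem3p6:
  fixes X :: "'a set" and adj :: "'a \<Rightarrow> 'a \<Rightarrow> bool" and f :: "'a \<Rightarrow> 'a"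
  assumes "digital_image X adj"
    and "finite X"
    and "simplicial_euler_char X adj \<noteq> 0"
    and "digitally_continuous X adj X adj f"
    and "strongly_homotopic X adj X adj f id"
  shows "(\<exists>x\<in>X. f x = x) \<or>
         (\<exists>x\<in>X. \<exists>y\<in>X. x \<noteq> y \<and> approx_fixed_point adj f x \<and> approx_fixed_point adj f y)"
proof -
  have "X \<noteq> {}" using assms(3) simplicial_euler_char_empty by auto
  then obtain x where "x \<in> X" "approx_fixed_point adj f x"
    using strongly_homotopic_id_approx_fixed_point assms(1,2,4,5) by blast
  moreover have "f x \<in> X" "approx_fixed_point adj f (f x)"
    using approx_fixed_point_image[OF assms(1,4)] \<open>x \<in> X\<close> \<open>approx_fixed_point adj f x\<close> assms(4)
    unfolding digitally_continuous_def by blast+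
  ultimately show ?thesis by blast
qed

end
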